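(* For each even integer $r\ge 2$, there are infinitely many $r$-regular graphs $G$ of even order with $\chi_{la}(G)=3$ and chromatic number $\chi(G)=2$.
   Context: For a connected graph $G=(V,E)$ with $q=|E|$, a local antimagic labeling is a bijection $f:E\to\{1,\dots,q\}$ such that adjacent vertices $x,y$ satisfy $f^+(x)\ne f^+(y)$, where $f^+(x)=\sum f(e)$ over edges $e$ incident to $x$; the local antimagic chromatic number $\chi_{la}(G)$ is the minimum number of distinct values of $f^+$ over all local antimagic labelings $f$ of $G$. *)

theory Defs
  imports Main
begin

definition simple_graph :: "'a set \<Rightarrow> 'a set set \<Rightarrow> bool" where
  "simple_graph V E \<longleftrightarrow> finite V \<and> (\<forall>e\<in>E. e \<subseteq> V \<and> card e = 2)"

definition incident_edges :: "'a set set \<Rightarrow> 'a \<Rightarrow> 'a set set" where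
  "incident_edges E x = {e\<in>E. x \<in> e}"

definition degree :: "'a set set \<Rightarrow> 'a \<Rightarrow> nat" where
  "degree E x = card (incident_edges E x)"

definition regular :: "'a set \<Rightarrow> 'a set set \<Rightarrow> nat \<Rightarrow> bool" where
  "regular V E r \<longleftrightarrow> (\<forall>x\<in>V. degree E x = r)"

definition connected_graph :: "'a set \<Rightarrow> 'a set set \<Rightarrow> bool" where
  "connected_graph V E \<longleftrightarrow> V \<noteq> {} \<and>
     (\<forall>x\<in>V. \<forall>y\<in>V. (x, y) \<in> {(u, v). {u, v} \<in> E}\<^sup>*)"

definition vsum :: "'a set set \<Rightarrow> ('a set \<Rightarrow> nat) \<Rightarrow> 'a \<Rightarrow> nat" where
  "vsum E f x = (\<Sum>e\<in>incident_edges E x. f e)"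

definition local_antimagic :: "'a set \<Rightarrow> 'a set set \<Rightarrow> ('a set \<Rightarrow> nat) \<Rightarrow> bool" where
  "local_antimagic V E f \<longleftrightarrow> bij_betw f E {1..card E} \<and>
     (\<forall>x\<in>V. \<forall>y\<in>V. {x, y} \<in> E \<longrightarrow> vsum E f x \<noteq> vsum E f y)"

text \<open>Local antimagic chromatic number (Inf of the empty set of naturals is 0).\<close>
definition chi_la :: "'a set \<Rightarrow> 'a set set \<Rightarrow> nat" where
  "chi_la V E = Inf {k. \<exists>f. local_antimagic V E f \<and> card (vsum E f ` V) = k}"

definition proper_colouring :: "'a set \<Rightarrow> 'a set set \<Rightarrow> nat \<Rightarrow> ('a \<Rightarrow> nat) \<Rightarrow> bool" where
  "proper_colouring V E k c \<longleftrightarrow> (\<forall>x\<in>V. c x < k) \<and>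
     (\<forall>x\<in>V. \<forall>y\<in>V. {x, y} \<in> E \<longrightarrow> c x \<noteq> c y)"

definition chromatic_number :: "'a set \<Rightarrow> 'a set set \<Rightarrow> nat" where
  "chromatic_number V E = Inf {k. \<exists>c. proper_colouring V E k c}"

end

theory Submission
  imports Defs
begin

text \<open>
  Lower bound: if a local antimagic labelling of an \<open>r\<close>-regular graph (\<open>r > 0\<close>) had only two
  vertex sums \<open>\<alpha> \<noteq> \<beta>\<close>, the classes \<open>X\<close>, \<open>Y\<close> of vertices with sum \<open>\<alpha>\<close>, \<open>\<beta>\<close> would both meet
  every edge exactly once. Double counting then gives \<open>|X| \<alpha> = \<Sum> f = |Y| \<beta>\<close> and
  \<open>r |X| = |E| = r |Y|\<close>, hence \<open>\<alpha> = \<beta>\<close>. So \<open>\<chi>\<^sub>l\<^sub>a \<ge> 3\<close> for every regular graph with an edge.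

  Upper bound: for \<open>r = 2s\<close> and even \<open>m \<ge> 4\<close>, replace each vertex of the cycle \<open>C\<^sub>m\<close> by a
  layer of \<open>s\<close> independent vertices and join consecutive layers completely. This graph is
  \<open>r\<close>-regular, connected and bipartite, with \<open>ms\<close> vertices. The \<open>s\<^sup>2\<close> edges between layers
  \<open>i\<close> and \<open>i + 1\<close> get a block of \<open>s\<^sup>2\<close> consecutive labels, namely the blocks number
  \<open>0, m - 1, 1, m - 2, \<dots>\<close> for \<open>i = 0, 1, 2, 3, \<dots>\<close>. Inside a block, the two endpoints of
  an edge are the two base-\<open>s\<close> digits of its offset (the one in layer \<open>i\<close> reversed), taken
  in opposite order on even and odd layers, so that the offsets seen by any vertex add up to
  \<open>s\<^sup>3 - s\<close>. Then every vertex of layer \<open>j\<close> has vertex sum \<open>s\<^sup>3 (w\<^sub>j + 1) + s\<close>, where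
  \<open>w\<^sub>j\<close> is \<open>m/2\<close>, \<open>m\<close> or \<open>m - 1\<close> according as \<open>j = 0\<close>, \<open>j > 0\<close> is even, or \<open>j\<close> is odd.
  Adjacent layers have different parity, so this labelling is local antimagic with exactly
  three vertex sums.
\<close>

lemma simple_graph_finite_edges:
  assumes "simple_graph V E"
  shows "finite E"
  using assms finite_subset[of E "Pow V"] by (auto simp: simple_graph_def)

lemma simple_graph_edgeE:
  assumes "simple_graph V E" and "e \<in> E"
  obtains x y where "e = {x, y}" "x \<noteq> y" "x \<in> V" "y \<in> V"
  using assms unfolding simple_graph_def by (metis card_2_iff insert_subset)

lemma sum_incident_edges_swap:
  assumes "finite X" and "finite E"
  shows "(\<Sum>v\<in>X. \<Sum>e\<in>incident_edges E v. w e) = (\<Sum>e\<in>E. w e * card (X \<inter> e))"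
proof -
  have "(\<Sum>v\<in>X. \<Sum>e\<in>incident_edges E v. w e) = (\<Sum>v\<in>X. \<Sum>e\<in>E. if v \<in> e then w e else 0)"
    using assms(2) by (simp add: incident_edges_def sum.inter_filter)
  also have "\<dots> = (\<Sum>e\<in>E. \<Sum>v\<in>X. if v \<in> e then w e else 0)"
    by (rule sum.swap)
  also have "\<dots> = (\<Sum>e\<in>E. w e * card (X \<inter> e))"
    using assms(1) by (simp add: sum.If_cases Int_def mult.commute)
  finally show ?thesis .
qed

lemma vertex_transversal_sums:
  assumes G: "simple_graph V E" and reg: "regular V E r" and "Z \<subseteq> V"
    and one: "\<And>e. e \<in> E \<Longrightarrow> card (Z \<inter> e) = 1"
  shows "(\<Sum>v\<in>Z. vsum E f v) = sum f E" and "card Z * r = card E"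
proof -
  have fin: "finite Z" "finite E"
    using G \<open>Z \<subseteq> V\<close> simple_graph_finite_edges by (auto simp: simple_graph_def intro: finite_subset)
  show "(\<Sum>v\<in>Z. vsum E f v) = sum f E"
    using sum_incident_edges_swap[OF fin, of f] one by (simp add: vsum_def)
  have "card Z * r = (\<Sum>v\<in>Z. degree E v)"
    using reg \<open>Z \<subseteq> V\<close> by (simp add: regular_def subset_iff)
  also have "\<dots> = card E"
    using sum_incident_edges_swap[OF fin, of "\<lambda>_. 1::nat"] one by (simp add: degree_def)
  finally show "card Z * r = card E" .
qed

lemma card_vsum_image_ge_3:
  assumes G: "simple_graph V E" and reg: "regular V E r" and "r > 0"
    and f: "local_antimagic V E f" and "E \<noteq> {}"
  shows "3 \<le> card (vsum E f ` V)"
proof (rule ccontr)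
  let ?F = "vsum E f"
  have adj: "?F x \<noteq> ?F y" if "{x, y} \<in> E" and "x \<in> V" "y \<in> V" for x y
    using f that by (auto simp: local_antimagic_def)
  obtain x y where xy: "{x, y} \<in> E" "x \<in> V" "y \<in> V"
    using \<open>E \<noteq> {}\<close> simple_graph_edgeE[OF G] by (metis ex_in_conv)
  assume "\<not> 3 \<le> card (?F ` V)"
  then have "card (?F ` V) \<le> card {?F x, ?F y}"
    using adj[OF xy] by simp
  then have img: "?F ` V = {?F x, ?F y}"
    using xy G by (intro card_seteq[symmetric]) (auto simp: simple_graph_def)
  define X where "X = {v \<in> V. ?F v = ?F x}"
  define Y where "Y = {v \<in> V. ?F v = ?F y}"
  have meets_once: "card (X \<inter> e) = 1 \<and> card (Y \<inter> e) = 1" if e: "e \<in> E" for e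
  proof -
    obtain u w where uw: "e = {u, w}" "u \<noteq> w" "u \<in> V" "w \<in> V"
      using simple_graph_edgeE[OF G e] .
    have "?F u \<noteq> ?F w" "?F u \<in> {?F x, ?F y}" "?F w \<in> {?F x, ?F y}"
      using adj e uw img by auto
    then show ?thesis
      using uw adj[OF xy] by (auto simp: X_def Y_def Int_insert_right)
  qed
  have "card X * ?F x = card Y * ?F y"
    using vertex_transversal_sums(1)[OF G reg, of X f] vertex_transversal_sums(1)[OF G reg, of Y f]
      meets_once by (simp add: X_def Y_def)
  moreover have "card X * r = card Y * r"
    using vertex_transversal_sums(2)[OF G reg, of X] vertex_transversal_sums(2)[OF G reg, of Y]
      meets_once by (simp add: X_def Y_def)
  moreover have "card X > 0"
    using G xy by (auto simp: X_def simple_graph_def card_gt_0_iff)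
  ultimately show False
    using adj[OF xy] \<open>r > 0\<close> by simp
qed

lemma chi_la_eq_3I:
  assumes "simple_graph V E" and "regular V E r" and "r > 0" and "E \<noteq> {}"
    and "local_antimagic V E f" and "card (vsum E f ` V) = 3"
  shows "chi_la V E = 3"
  unfolding chi_la_def
proof (rule cInf_eq_minimum)
  show "3 \<in> {k. \<exists>f. local_antimagic V E f \<and> card (vsum E f ` V) = k}"
    using assms(5,6) by blast
next
  fix k assume "k \<in> {k. \<exists>f. local_antimagic V E f \<and> card (vsum E f ` V) = k}"
  then show "3 \<le> k"
    using card_vsum_image_ge_3[OF assms(1-3) _ assms(4)] by blast
qed

lemma chromatic_number_eq_2I:
  assumes "proper_colouring V E 2 c" and "{x, y} \<in> E" "x \<in> V" "y \<in> V"
  shows "chromatic_number V E = 2"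
  unfolding chromatic_number_def
proof (rule cInf_eq_minimum)
  show "2 \<in> {k. \<exists>c. proper_colouring V E k c}"
    using assms(1) by blast
next
  fix k assume "k \<in> {k. \<exists>c. proper_colouring V E k c}"
  then obtain c' where "c' x \<noteq> c' y" "c' x < k" "c' y < k"
    using assms(2-4) unfolding proper_colouring_def by blast
  then show "2 \<le> k" by linarith
qed

lemma connected_graphI:
  assumes "x\<^sub>0 \<in> V" and reach: "\<And>v. v \<in> V \<Longrightarrow> (x\<^sub>0, v) \<in> {(u, v). {u, v} \<in> E}\<^sup>*"
  shows "connected_graph V E"
proof -
  let ?R = "{(u, v). {u, v} \<in> E}"
  have "?R\<inverse> = ?R" by (auto simp: insert_commute)
  then have "(v, x\<^sub>0) \<in> ?R\<^sup>*" if "v \<in> V" for v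
    using reach[OF that] rtrancl_converseI by fastforce
  then show ?thesis
    using assms unfolding connected_graph_def by (meson empty_iff rtrancl_trans)
qed

lemma mult_add_eq_mult_add_iff:
  fixes s :: nat
  assumes "a < s" and "b < s"
  shows "i * s + a = j * s + b \<longleftrightarrow> i = j \<and> a = b"
proof
  assume "i * s + a = j * s + b"
  then have "(i * s + a) div s = (j * s + b) div s" and "(i * s + a) mod s = (j * s + b) mod s"
    by simp_all
  then show "i = j \<and> a = b"
    using assms by simp
qed simp

lemma double_sum_lessThan: "2 * (\<Sum>a<n. a) = n * (n - 1 :: nat)"
proof (induction n)
  case (Suc n)
  then show ?case by (cases n) (auto simp: algebra_simps)
qed simp

locale cycle_blowup =
  fixes s m :: nat
  assumes s_pos: "0 < s" and m_even: "even m" and m_ge_4: "4 \<le> m"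
begin

definition vertex :: "nat \<Rightarrow> nat \<Rightarrow> nat" where
  "vertex i a = i * s + a"

definition verts :: "nat set" where
  "verts = {..<m * s}"

definition edge_index :: "(nat \<times> nat \<times> nat) set" where
  "edge_index = {..<m} \<times> {..<s} \<times> {..<s}"

fun edge :: "nat \<times> nat \<times> nat \<Rightarrow> nat set" where
  "edge (i, a, b) = {vertex i a, vertex (Suc i mod m) b}"

definition edges :: "nat set set" where
  "edges = edge ` edge_index"

definition pred_layer :: "nat \<Rightarrow> nat" where
  "pred_layer j = (if j = 0 then m - 1 else j - 1)"

lemma vertex_eq_iff: "a < s \<Longrightarrow> c < s \<Longrightarrow> vertex i a = vertex j c \<longleftrightarrow> i = j \<and> a = c"
  unfolding vertex_def by (rule mult_add_eq_mult_add_iff)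

lemma vertex_in_verts: "i < m \<Longrightarrow> a < s \<Longrightarrow> vertex i a \<in> verts"
  using mult_le_mono1[of "Suc i" m s] by (simp add: vertex_def verts_def)

lemma vertsE:
  assumes "v \<in> verts"
  obtains j c where "j < m" "c < s" "v = vertex j c"
proof
  show "v div s < m" using assms by (simp add: verts_def less_mult_imp_div_less)
  show "v mod s < s" using s_pos by simp
  show "v = vertex (v div s) (v mod s)" by (simp add: vertex_def)
qed

lemma card_verts: "card verts = m * s"
  by (simp add: verts_def)

lemma Suc_mod_layer: "i < m \<Longrightarrow> Suc i mod m = (if Suc i = m then 0 else Suc i)"
  by auto

lemma even_Suc_mod_layer_iff: "i < m \<Longrightarrow> even (Suc i mod m) \<longleftrightarrow> odd i"
  using m_even by (auto simp: Suc_mod_layer)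

lemma pred_layer_lt: "j < m \<Longrightarrow> pred_layer j < m"
  by (auto simp: pred_layer_def)

lemma pred_layer_neq: "j < m \<Longrightarrow> pred_layer j \<noteq> j"
  using m_ge_4 by (auto simp: pred_layer_def)

lemma even_pred_layer_iff: "j < m \<Longrightarrow> even (pred_layer j) \<longleftrightarrow> odd j"
  using m_even m_ge_4 by (auto simp: pred_layer_def)

lemma Suc_mod_layer_eq_iff: "i < m \<Longrightarrow> j < m \<Longrightarrow> Suc i mod m = j \<longleftrightarrow> i = pred_layer j"
  using m_ge_4 by (auto simp: pred_layer_def Suc_mod_layer)

lemma inj_on_edge: "inj_on edge edge_index"
proof (rule inj_onI)
  fix t t' assume "t \<in> edge_index" "t' \<in> edge_index" and eq: "edge t = edge t'"
  then obtain i a b i' a' b' where t: "t = (i, a, b)" "t' = (i', a', b')"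
    and bounds: "i < m" "a < s" "b < s" "i' < m" "a' < s" "b' < s"
    by (auto simp: edge_index_def)
  have "{vertex i a, vertex (Suc i mod m) b} = {vertex i' a', vertex (Suc i' mod m) b'}"
    using eq t by simp
  then consider "vertex i a = vertex i' a'" "vertex (Suc i mod m) b = vertex (Suc i' mod m) b'"
    | "vertex i a = vertex (Suc i' mod m) b'" "vertex (Suc i mod m) b = vertex i' a'"
    by (auto simp: doubleton_eq_iff)
  then show "t = t'"
  proof cases
    case 1
    then show ?thesis using bounds t vertex_eq_iff by simp
  next
    case 2
    then have "i = Suc i' mod m" "Suc i mod m = i'" using bounds vertex_eq_iff by auto
    then show ?thesis using bounds m_ge_4 by (auto simp: Suc_mod_layer split: if_splits)
  qed
qed

lemma card_edges: "card edges = m * s * s"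
  using card_image[OF inj_on_edge] by (simp add: edges_def edge_index_def card_cartesian_product)

lemma edge_in_edges: "i < m \<Longrightarrow> a < s \<Longrightarrow> b < s \<Longrightarrow> {vertex i a, vertex (Suc i mod m) b} \<in> edges"
  using edge.simps[of i a b] unfolding edges_def edge_index_def by (metis image_eqI lessThan_iff mem_Sigma_iff)

lemma edgesE:
  assumes "{x, y} \<in> edges"
  obtains i i' a b where "i < m" "i' < m" "a < s" "b < s" "even i \<longleftrightarrow> odd i'"
    "x = vertex i a" "y = vertex i' b"
proof -
  obtain i a b where bounds: "i < m" "a < s" "b < s"
    and "{x, y} = {vertex i a, vertex (Suc i mod m) b}"
    using assms by (auto simp: edges_def edge_index_def)
  moreover have "even i \<longleftrightarrow> odd (Suc i mod m)" "Suc i mod m < m"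
    using bounds even_Suc_mod_layer_iff by auto
  ultimately show ?thesis
    using that[of i "Suc i mod m" a b] that[of "Suc i mod m" i b a] by (auto simp: doubleton_eq_iff)
qed

lemma simple_graph_blowup: "simple_graph verts edges"
proof -
  have "e \<subseteq> verts \<and> card e = 2" if "e \<in> edges" for e
  proof -
    obtain i a b where bounds: "i < m" "a < s" "b < s"
      and e: "e = {vertex i a, vertex (Suc i mod m) b}"
      using \<open>e \<in> edges\<close> by (auto simp: edges_def edge_index_def)
    have "Suc i mod m \<noteq> i" using bounds m_ge_4 by (auto simp: Suc_mod_layer)
    then have "vertex i a \<noteq> vertex (Suc i mod m) b" using bounds vertex_eq_iff by auto
    then show ?thesis
      using e bounds vertex_in_verts by simp
  qed
  then show ?thesis by (simp add: simple_graph_def verts_def)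
qed

lemma edge_index_incident:
  assumes "j < m" "c < s"
  shows "{t \<in> edge_index. vertex j c \<in> edge t}
    = (\<lambda>b. (j, c, b)) ` {..<s} \<union> (\<lambda>a. (pred_layer j, a, c)) ` {..<s}"
proof (intro set_eqI iffI)
  fix t assume "t \<in> {t \<in> edge_index. vertex j c \<in> edge t}"
  then obtain i a b where t: "t = (i, a, b)" and bounds: "i < m" "a < s" "b < s"
    and "vertex j c = vertex i a \<or> vertex j c = vertex (Suc i mod m) b"
    by (auto simp: edge_index_def)
  then have "(j = i \<and> c = a) \<or> (Suc i mod m = j \<and> c = b)"
    using assms bounds vertex_eq_iff by auto
  then have "(j = i \<and> c = a) \<or> (i = pred_layer j \<and> c = b)"
    using assms bounds Suc_mod_layer_eq_iff by blast
  then show "t \<in> (\<lambda>b. (j, c, b)) ` {..<s} \<union> (\<lambda>a. (pred_layer j, a, c)) ` {..<s}"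
    using t bounds by auto
next
  fix t assume "t \<in> (\<lambda>b. (j, c, b)) ` {..<s} \<union> (\<lambda>a. (pred_layer j, a, c)) ` {..<s}"
  moreover have "Suc (pred_layer j) mod m = j"
    using Suc_mod_layer_eq_iff pred_layer_lt assms by blast
  ultimately show "t \<in> {t \<in> edge_index. vertex j c \<in> edge t}"
    using assms pred_layer_lt by (auto simp: edge_index_def)
qed

lemma sum_incident_edges:
  assumes "j < m" "c < s"
  shows "(\<Sum>e\<in>incident_edges edges (vertex j c). w e)
    = (\<Sum>b<s. w (edge (j, c, b))) + (\<Sum>a<s. w (edge (pred_layer j, a, c)))"
proof -
  let ?T = "{t \<in> edge_index. vertex j c \<in> edge t}"
  have "incident_edges edges (vertex j c) = edge ` ?T"
    by (auto simp: incident_edges_def edges_def)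
  moreover have "inj_on edge ?T"
    using inj_on_edge by (rule inj_on_subset) auto
  ultimately have "(\<Sum>e\<in>incident_edges edges (vertex j c). w e) = (\<Sum>t\<in>?T. w (edge t))"
    by (simp add: sum.reindex)
  also have "\<dots> = (\<Sum>t\<in>(\<lambda>b. (j, c, b)) ` {..<s}. w (edge t))
      + (\<Sum>t\<in>(\<lambda>a. (pred_layer j, a, c)) ` {..<s}. w (edge t))"
    unfolding edge_index_incident[OF assms]
    by (rule sum.union_disjoint) (use pred_layer_neq[OF assms(1)] in auto)
  also have "\<dots> = (\<Sum>b<s. w (edge (j, c, b))) + (\<Sum>a<s. w (edge (pred_layer j, a, c)))"
    by (simp add: sum.reindex inj_on_def)
  finally show ?thesis .
qed

lemma regular_blowup: "regular verts edges (2 * s)"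
  unfolding regular_def degree_def
  using sum_incident_edges[of _ _ "\<lambda>_. 1::nat"] by (auto elim!: vertsE)

lemma connected_blowup: "connected_graph verts edges"
proof (rule connected_graphI)
  let ?R = "{(u, v). {u, v} \<in> edges}"
  show "vertex 0 0 \<in> verts"
    using vertex_in_verts m_ge_4 s_pos by simp
  have reach: "(vertex 0 0, vertex j c) \<in> ?R\<^sup>*" if "j < m" "c < s" for j c
    using that
  proof (induction j arbitrary: c)
    case 0
    have "(vertex 0 0, vertex 1 0) \<in> ?R" "(vertex 1 0, vertex 0 c) \<in> ?R"
      using edge_in_edges[of 0 0 0] edge_in_edges[of 0 c 0] 0 m_ge_4 s_pos
      by (simp_all add: insert_commute)
    then show ?case by (meson converse_rtrancl_into_rtrancl r_into_rtrancl)
  next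
    case (Suc j)
    have "(vertex j 0, vertex (Suc j) c) \<in> ?R"
      using edge_in_edges[of j 0 c] Suc.prems s_pos by simp
    then show ?case
      using Suc s_pos by (meson Suc_lessD rtrancl_into_rtrancl)
  qed
  show "(vertex 0 0, v) \<in> ?R\<^sup>*" if "v \<in> verts" for v
    using that by (auto elim!: vertsE intro: reach)
qed

lemma chromatic_number_blowup: "chromatic_number verts edges = 2"
proof (rule chromatic_number_eq_2I)
  show "proper_colouring verts edges 2 (\<lambda>v. v div s mod 2)"
    unfolding proper_colouring_def
  proof (intro conjI ballI impI)
    fix x y assume "{x, y} \<in> edges"
    then obtain i i' a b where "i < m" "i' < m" "a < s" "b < s" "even i \<longleftrightarrow> odd i'"
      "x = vertex i a" "y = vertex i' b"
      by (rule edgesE)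
    then show "x div s mod 2 \<noteq> y div s mod 2"
      by (auto simp: vertex_def)
  qed simp
  show "{vertex 0 0, vertex (Suc 0 mod m) 0} \<in> edges"
    using edge_in_edges[of 0 0 0] m_ge_4 s_pos by simp
  show "vertex 0 0 \<in> verts" "vertex (Suc 0 mod m) 0 \<in> verts"
    using vertex_in_verts m_ge_4 s_pos by auto
qed

definition layer_rank :: "nat \<Rightarrow> nat" where
  "layer_rank i = (if even i then i div 2 else m - 1 - i div 2)"

definition cell_rank :: "nat \<Rightarrow> nat \<Rightarrow> nat \<Rightarrow> nat" where
  "cell_rank i a b = (if even i then s * b + (s - 1 - a) else s * (s - 1 - a) + b)"

fun edge_label :: "nat \<times> nat \<times> nat \<Rightarrow> nat" where
  "edge_label (i, a, b) = s * s * layer_rank i + cell_rank i a b + 1"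

definition labelling :: "nat set \<Rightarrow> nat" where
  "labelling e = edge_label (inv_into edge_index edge e)"

definition layer_weight :: "nat \<Rightarrow> nat" where
  "layer_weight j = (if j = 0 then m div 2 else if even j then m else m - 1)"

lemma layer_rank_lt: "i < m \<Longrightarrow> layer_rank i < m"
  using m_ge_4 by (auto simp: layer_rank_def)

lemma inj_on_layer_rank: "inj_on layer_rank {..<m}"
proof (rule inj_onI)
  fix i i' assume "i \<in> {..<m}" "i' \<in> {..<m}" "layer_rank i = layer_rank i'"
  moreover have "even i \<longleftrightarrow> layer_rank i < m div 2" if "i < m" for i
    using that m_even by (auto simp: layer_rank_def elim!: evenE oddE)
  ultimately show "i = i'"
    by (auto simp: layer_rank_def split: if_splits elim!: evenE oddE)
qed

lemma cell_rank_lt: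
  assumes "a < s" "b < s"
  shows "cell_rank i a b < s * s"
proof -
  have bound: "s * x + y < s * s" if "x < s" "y < s" for x y
    using that mult_le_mono2[of "Suc x" s s] by simp
  show ?thesis
    using bound[of b "s - 1 - a"] bound[of "s - 1 - a" b] assms by (simp add: cell_rank_def)
qed

lemma cell_rank_inj:
  "a < s \<Longrightarrow> b < s \<Longrightarrow> a' < s \<Longrightarrow> b' < s \<Longrightarrow> cell_rank i a b = cell_rank i a' b' \<Longrightarrow> a = a' \<and> b = b'"
  using mult_add_eq_mult_add_iff[of "s - 1 - a" s "s - 1 - a'" b b']
    mult_add_eq_mult_add_iff[of b s b' "s - 1 - a" "s - 1 - a'"]
  by (auto simp: cell_rank_def mult.commute split: if_splits)

lemma bij_betw_edge_label: "bij_betw edge_label edge_index {1..m * s * s}"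
proof -
  have "inj_on edge_label edge_index"
  proof (rule inj_onI)
    fix t t' assume "t \<in> edge_index" "t' \<in> edge_index" and eq: "edge_label t = edge_label t'"
    then obtain i a b i' a' b' where t: "t = (i, a, b)" "t' = (i', a', b')"
      and bounds: "i < m" "a < s" "b < s" "i' < m" "a' < s" "b' < s"
      by (auto simp: edge_index_def)
    have "layer_rank i * (s * s) + cell_rank i a b = layer_rank i' * (s * s) + cell_rank i' a' b'"
      using eq t by (simp add: mult.commute)
    then have "layer_rank i = layer_rank i'" "cell_rank i a b = cell_rank i' a' b'"
      using mult_add_eq_mult_add_iff cell_rank_lt bounds by blast+
    then show "t = t'"
      using inj_on_layer_rank cell_rank_inj bounds t by (auto dest: inj_onD)
  qed
  moreover have "edge_label t \<in> {1..m * s * s}" if "t \<in> edge_index" for t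
  proof -
    obtain i a b where t: "t = (i, a, b)" and bounds: "i < m" "a < s" "b < s"
      using \<open>t \<in> edge_index\<close> by (auto simp: edge_index_def)
    then have "s * s * layer_rank i + s * s \<le> m * s * s"
      using layer_rank_lt[of i] mult_le_mono1[of "Suc (layer_rank i)" m "s * s"]
      by (simp add: algebra_simps)
    then show ?thesis
      using cell_rank_lt[OF bounds(2,3), of i] t by simp
  qed
  moreover have "card edge_index = card {1..m * s * s}"
    by (simp add: edge_index_def card_cartesian_product)
  ultimately show ?thesis
    by (simp add: bij_betw_def card_image card_subset_eq image_subset_iff)
qed

lemma labelling_edge: "t \<in> edge_index \<Longrightarrow> labelling (edge t) = edge_label t"
  using inj_on_edge by (simp add: labelling_def)

lemma bij_betw_labelling: "bij_betw labelling edges {1..card edges}"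
proof -
  have "bij_betw (edge_label \<circ> inv_into edge_index edge) edges {1..m * s * s}"
    using bij_betw_inv_into[OF inj_on_edge[THEN inj_on_imp_bij_betw]] bij_betw_edge_label
    unfolding edges_def by (rule bij_betw_trans)
  then show ?thesis
    by (simp add: card_edges labelling_def[abs_def] comp_def)
qed

lemma layer_rank_add_pred_layer:
  assumes "j < m"
  shows "layer_rank j + layer_rank (pred_layer j) = layer_weight j"
proof -
  obtain h where m: "m = 2 * h" "h \<ge> 2" using m_even m_ge_4 by (auto elim!: evenE)
  consider "j = 0" | k where "j = 2 * k" "k > 0" | k where "j = 2 * k + 1"
    by (metis evenE oddE gr0I mult_0_right)
  then show ?thesis
  proof cases
    case 1
    have "odd (m - 1)" "(m - 1) div 2 = h - 1" "m div 2 = h" "m - 1 - (h - 1) = h"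
      using m by (auto simp: odd_pos)
    then show ?thesis
      using 1 by (simp add: layer_rank_def pred_layer_def layer_weight_def)
  next
    case 2
    then have "odd (j - 1)" "(j - 1) div 2 = k - 1" "k + (m - 1 - (k - 1)) = m"
      using assms by auto
    then show ?thesis
      using 2 by (simp add: layer_rank_def pred_layer_def layer_weight_def)
  next
    case 3
    then have "m - 1 - k + k = m - 1"
      using assms by simp
    then show ?thesis
      using 3 by (simp add: layer_rank_def pred_layer_def layer_weight_def)
  qed
qed

lemma cell_rank_sum:
  assumes "c < s" and "even i \<longleftrightarrow> odd i'"
  shows "(\<Sum>b<s. cell_rank i c b) + (\<Sum>a<s. cell_rank i' a c) + s = s ^ 3"
proof -
  define T where "T = (\<Sum>b<s. b)"
  have reversed: "(\<Sum>a<s. s - Suc a) = T"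
    using sum.nat_diff_reindex[of "\<lambda>a. a" s] by (simp add: T_def)
  have double_T: "T + T = s * (s - 1)"
    using double_sum_lessThan[of s] by (simp add: T_def)
  have "s * (s * (s - 1)) + s * (s - 1) + s = s ^ 3"
    using s_pos by (cases s) (simp_all add: algebra_simps power3_eq_cube)
  moreover have "s * T + s * T = s * (s * (s - 1))"
    using double_T by (metis add_mult_distrib2)
  ultimately have total_even: "s * T + s * T + s * (s - 1) + s = s ^ 3"
    and total_odd: "s * (s * (s - 1)) + T + T + s = s ^ 3"
    using double_T by linarith+
  have "s - 1 - c + c = s - 1"
    using assms(1) by simp
  then have split_c: "s * (s - 1 - c) + s * c = s * (s - 1)"
    and split_c': "s * (s * (s - 1 - c)) + s * (s * c) = s * (s * (s - 1))"
    by (metis add_mult_distrib2)+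
  show ?thesis
  proof (cases "even i")
    case True
    have "(\<Sum>b<s. cell_rank i c b) = s * T + s * (s - 1 - c)"
      using True by (simp add: cell_rank_def sum.distrib sum_distrib_left T_def)
    moreover have "(\<Sum>a<s. cell_rank i' a c) = s * T + s * c"
      using True assms(2) by (simp add: cell_rank_def sum.distrib sum_distrib_left[symmetric] reversed)
    ultimately show ?thesis
      using total_even split_c by linarith
  next
    case False
    have "(\<Sum>b<s. cell_rank i c b) = s * (s * (s - 1 - c)) + T"
      using False by (simp add: cell_rank_def sum.distrib T_def)
    moreover have "(\<Sum>a<s. cell_rank i' a c) = (\<Sum>a<s. s - Suc a) + (\<Sum>a<s. s * c)"
      unfolding sum.distrib[symmetric] using False assms(2) by (intro sum.cong) (simp_all add: cell_rank_def)
    then have "(\<Sum>a<s. cell_rank i' a c) = T + s * (s * c)"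
      by (simp add: reversed)
    ultimately show ?thesis
      using total_odd split_c' by linarith
  qed
qed

lemma vsum_vertex:
  assumes "j < m" "c < s"
  shows "vsum edges labelling (vertex j c) = s ^ 3 * (layer_weight j + 1) + s"
proof -
  have in_index: "(j, c, b) \<in> edge_index" "(pred_layer j, a, c) \<in> edge_index" if "a < s" "b < s" for a b
    using assms that pred_layer_lt by (auto simp: edge_index_def)
  have "vsum edges labelling (vertex j c)
      = (\<Sum>b<s. edge_label (j, c, b)) + (\<Sum>a<s. edge_label (pred_layer j, a, c))"
    unfolding vsum_def sum_incident_edges[OF assms] using in_index
    by (simp add: labelling_edge del: edge.simps)
  also have "\<dots> = s ^ 3 * (layer_rank j + layer_rank (pred_layer j))
      + ((\<Sum>b<s. cell_rank j c b) + (\<Sum>a<s. cell_rank (pred_layer j) a c) + s) + s"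
    by (simp only: edge_label.simps sum.distrib) (simp add: algebra_simps power3_eq_cube)
  also have "\<dots> = s ^ 3 * (layer_weight j + 1) + s"
    using cell_rank_sum[OF assms(2)] even_pred_layer_iff[OF assms(1)] layer_rank_add_pred_layer[OF assms(1)]
    by simp
  finally show ?thesis .
qed

lemma layer_weight_neq: "even j \<longleftrightarrow> odd j' \<Longrightarrow> layer_weight j \<noteq> layer_weight j'"
proof -
  assume parity: "even j \<longleftrightarrow> odd j'"
  have "m div 2 < m - 1" "m - 1 < m" using m_even m_ge_4 by (auto elim!: evenE)
  then show ?thesis using parity by (auto simp: layer_weight_def dest: odd_pos)
qed

lemma local_antimagic_labelling: "local_antimagic verts edges labelling"
  unfolding local_antimagic_def
proof (intro conjI ballI impI bij_betw_labelling)
  fix x y assume "{x, y} \<in> edges"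
  then obtain i i' a b where "i < m" "i' < m" "a < s" "b < s" "even i \<longleftrightarrow> odd i'"
    "x = vertex i a" "y = vertex i' b"
    by (rule edgesE)
  then show "vsum edges labelling x \<noteq> vsum edges labelling y"
    using vsum_vertex layer_weight_neq s_pos by simp
qed

lemma card_vsum_labelling: "card (vsum edges labelling ` verts) = 3"
proof -
  let ?val = "\<lambda>w. s ^ 3 * (w + 1) + s"
  have "vsum edges labelling ` verts = ?val ` layer_weight ` {..<m}"
  proof (intro equalityI subsetI)
    fix z assume "z \<in> vsum edges labelling ` verts"
    then show "z \<in> ?val ` layer_weight ` {..<m}"
      by (auto simp: vsum_vertex elim!: vertsE)
  next
    fix z assume "z \<in> ?val ` layer_weight ` {..<m}"
    then obtain j where "j < m" "z = vsum edges labelling (vertex j 0)"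
      using vsum_vertex s_pos by auto
    then show "z \<in> vsum edges labelling ` verts"
      using vertex_in_verts s_pos by blast
  qed
  moreover have "layer_weight ` {..<m} = {m div 2, m, m - 1}"
  proof
    show "layer_weight ` {..<m} \<subseteq> {m div 2, m, m - 1}"
      by (auto simp: layer_weight_def)
    show "{m div 2, m, m - 1} \<subseteq> layer_weight ` {..<m}"
      using rev_image_eqI[of 0 "{..<m}" _ layer_weight] rev_image_eqI[of 2 "{..<m}" _ layer_weight]
        rev_image_eqI[of 1 "{..<m}" _ layer_weight] m_ge_4
      by (simp add: layer_weight_def)
  qed
  moreover have "card {m div 2, m, m - 1} = 3"
    using m_even m_ge_4 by (auto elim!: evenE)
  moreover have "card (?val ` layer_weight ` {..<m}) = card (layer_weight ` {..<m})"
    using s_pos by (intro card_image inj_onI) simp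
  ultimately show ?thesis
    by simp
qed

lemma chi_la_blowup: "chi_la verts edges = 3"
proof (rule chi_la_eq_3I[OF simple_graph_blowup regular_blowup _ _ local_antimagic_labelling card_vsum_labelling])
  show "0 < 2 * s" using s_pos by simp
  show "edges \<noteq> {}" using edge_in_edges[of 0 0 0] m_ge_4 s_pos by auto
qed

end

theorem mainTheorem7:
  fixes r :: nat
  assumes "even r" and "r \<ge> 2"
  shows "\<forall>N::nat. \<exists>(V :: nat set) (E :: nat set set).
           simple_graph V E \<and> connected_graph V E \<and> regular V E r \<and>
           even (card V) \<and> card V \<ge> N \<and>
           chi_la V E = 3 \<and> chromatic_number V E = 2"
proof
  fix N :: nat
  interpret cycle_blowup "r div 2" "2 * N + 4"
    using assms by unfold_locales auto
  have half_r: "1 \<le> r div 2" "r = 2 * (r div 2)"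
    using assms by presburger+
  have "N \<le> 2 * N + 4"
    by simp
  also have "\<dots> \<le> (2 * N + 4) * (r div 2)"
    using mult_le_mono2[OF half_r(1), of "2 * N + 4"] by (simp only: mult_1_right)
  finally have "N \<le> (2 * N + 4) * (r div 2)" .
  with half_r(2) show "\<exists>(V :: nat set) (E :: nat set set).
           simple_graph V E \<and> connected_graph V E \<and> regular V E r \<and>
           even (card V) \<and> card V \<ge> N \<and>
           chi_la V E = 3 \<and> chromatic_number V E = 2"
    using simple_graph_blowup connected_blowup regular_blowup chi_la_blowup chromatic_number_blowup
    by (intro exI[of _ verts] exI[of _ edges]) (simp add: card_verts)
qed

end
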